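(* Let $\hat\sigma_x,\hat\sigma_y,\hat\sigma_z$ be the Pauli matrices and, for $m\in\{-\tfrac12,\tfrac12\}$, $\alpha\in[0,2\pi]$, $\beta\in[0,\pi]$, let $$\hat U(m,\alpha,\beta)=\tfrac12\hat I-m\cos\alpha\sin\beta\,\hat\sigma_x-m\sin\alpha\sin\beta\,\hat\sigma_y+m\cos\beta\,\hat\sigma_z .$$ For a qubit state (density matrix) $\hat\rho$ on $\mathbb{C}^2$ define its tomogram $w_{\hat\rho}(m,\alpha,\beta)=\mathrm{Tr}\big(\hat\rho\,\hat U(m,\alpha,\beta)\big)$, and let $\mathfrak T(\mathbb{C}^2)$ be the set of all such tomograms. For $a\in\{x,y,z\}$ let $\breve\Sigma_a$ be the map on $\mathfrak T(\mathbb{C}^2)$ defined by $\breve\Sigma_a(w_{\hat\rho})=w_{\hat\sigma_a\hat\rho\hat\sigma_a}$. Write ${\bf x}=(m,\alpha,\beta)$, ${\bf x}'=(m',\alpha',\beta')$ and $$\int g({\bf x}')\,d{\bf x}':=\sum_{m'=\pm1/2}\frac{1}{2\pi}\int_0^{2\pi}\!\!\int_0^{\pi} g(m',\alpha',\beta')\sin\beta'\,d\beta'\,d\alpha'.$$ Then for each $a\in\{x,y,z\}$ and every $w\in\mathfrak T(\mathbb{C}^2)$, $$\breve\Sigma_a(w)({\bf x})=\int K_a({\bf x};{\bf x}')\,w({\bf x}')\,d{\bf x}',$$ where, with $\delta_{mm'}$ the Kronecker delta, $$K_x({\bf x};{\bf x}')=\tfrac12\delta_{mm'}\big(1+3\cos\alpha\sin\beta\cos\alpha'\sin\beta'-3\sin\alpha\sin\beta\sin\alpha'\sin\beta'-3\cos\beta\cos\beta'\big),$$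 $$K_y({\bf x};{\bf x}')=\tfrac12\delta_{mm'}\big(1-3\cos\alpha\sin\beta\cos\alpha'\sin\beta'+3\sin\alpha\sin\beta\sin\alpha'\sin\beta'-3\cos\beta\cos\beta'\big),$$ $$K_z({\bf x};{\bf x}')=\tfrac12\delta_{mm'}\big(1-3\cos\alpha\sin\beta\cos\alpha'\sin\beta'-3\sin\alpha\sin\beta\sin\alpha'\sin\beta'+3\cos\beta\cos\beta'\big).$$
   Context: A qubit state is a positive semidefinite $2\times2$ complex matrix of trace one. $\hat I$ denotes the $2\times 2$ identity matrix. *)

theory Defs
  imports "HOL-Analysis.Analysis"
begin

type_synonym cmat2 = "complex^2^2"

definition Id2 :: cmat2 where "Id2 = mat 1"

definition sigma_x :: cmat2 where
  "sigma_x = (\<chi> i j. if i \<noteq> j then 1 else 0)"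

definition sigma_y :: cmat2 where
  "sigma_y = (\<chi> i j. if i = 0 \<and> j = 1 then - \<i> else if i = 1 \<and> j = 0 then \<i> else 0)"

definition sigma_z :: cmat2 where
  "sigma_z = (\<chi> i j. if i = j then (if i = 0 then 1 else -1) else 0)"

definition psd2 :: "cmat2 \<Rightarrow> bool" where
  "psd2 A \<longleftrightarrow> (\<forall>v::complex^2.
     let q = (\<Sum>i\<in>UNIV. \<Sum>j\<in>UNIV. cnj (v$i) * A$i$j * v$j) in Im q = 0 \<and> Re q \<ge> 0)"

definition qubit_state :: "cmat2 \<Rightarrow> bool" where
  "qubit_state \<rho> \<longleftrightarrow> psd2 \<rho> \<and> trace \<rho> = 1"

definition cscale :: "complex \<Rightarrow> cmat2 \<Rightarrow> cmat2" where
  "cscale c A = (\<chi> i j. c * A$i$j)"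

definition U_op :: "real \<Rightarrow> real \<Rightarrow> real \<Rightarrow> cmat2" where
  "U_op m \<alpha> \<beta> = cscale (1/2) Id2
     - cscale (complex_of_real (m * cos \<alpha> * sin \<beta>)) sigma_x
     - cscale (complex_of_real (m * sin \<alpha> * sin \<beta>)) sigma_y
     + cscale (complex_of_real (m * cos \<beta>)) sigma_z"

definition tomogram :: "cmat2 \<Rightarrow> real \<Rightarrow> real \<Rightarrow> real \<Rightarrow> complex" where
  "tomogram \<rho> m \<alpha> \<beta> = trace (\<rho> ** U_op m \<alpha> \<beta>)"

definition tomograms :: "(real \<Rightarrow> real \<Rightarrow> real \<Rightarrow> complex) set" where
  "tomograms = {tomogram \<rho> | \<rho>. qubit_state \<rho>}"

definition tint :: "(real \<Rightarrow> real \<Rightarrow> real \<Rightarrow> complex) \<Rightarrow> complex" where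
  "tint g = (\<Sum>m'\<in>{-1/2, 1/2::real}.
     complex_of_real (1 / (2*pi)) *
       integral {0..2*pi} (\<lambda>\<alpha>'. integral {0..pi} (\<lambda>\<beta>'. g m' \<alpha>' \<beta>' * complex_of_real (sin \<beta>'))))"

definition kdelta :: "real \<Rightarrow> real \<Rightarrow> real" where
  "kdelta m m' = (if m = m' then 1 else 0)"

datatype pauli_axis = AX | AY | AZ

definition pauli :: "pauli_axis \<Rightarrow> cmat2" where
  "pauli a = (case a of AX \<Rightarrow> sigma_x | AY \<Rightarrow> sigma_y | AZ \<Rightarrow> sigma_z)"

definition ksign :: "pauli_axis \<Rightarrow> real \<times> real \<times> real" where
  "ksign a = (case a of AX \<Rightarrow> (1, -1, -1) | AY \<Rightarrow> (-1, 1, -1) | AZ \<Rightarrow> (-1, -1, 1))"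

definition kernel :: "pauli_axis \<Rightarrow> real \<Rightarrow> real \<Rightarrow> real \<Rightarrow> real \<Rightarrow> real \<Rightarrow> real \<Rightarrow> real" where
  "kernel a m \<alpha> \<beta> m' \<alpha>' \<beta>' = (case ksign a of (s1, s2, s3) \<Rightarrow>
     1/2 * kdelta m m' * (1 + 3 * s1 * cos \<alpha> * sin \<beta> * cos \<alpha>' * sin \<beta>'
                              + 3 * s2 * sin \<alpha> * sin \<beta> * sin \<alpha>' * sin \<beta>'
                              + 3 * s3 * cos \<beta> * cos \<beta>'))"

definition Sigma_breve :: "pauli_axis \<Rightarrow> (real \<Rightarrow> real \<Rightarrow> real \<Rightarrow> complex) \<Rightarrow> (real \<Rightarrow> real \<Rightarrow> real \<Rightarrow> complex)" where
  "Sigma_breve a w = tomogram (pauli a ** (SOME \<rho>. qubit_state \<rho> \<and> tomogram \<rho> = w) ** pauli a)"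

end

theory Submission
  imports Defs
begin

text \<open>Writing n = (cos \<alpha> sin \<beta>, sin \<alpha> sin \<beta>, cos \<beta>), the tomogram of \<rho> is the affine function
  tr \<rho> / 2 + m (n \<cdot> r) of the direction n, where r_b = \<plusminus>tr(\<rho> \<sigma>_b).  Conjugation by \<sigma>_a
  leaves tr \<rho> and r_a unchanged and flips the two other components of r, since \<sigma>_a anticommutes
  with them.  On the other side, the measure sin \<beta>' d\<beta>' d\<alpha>' / 2\<pi> has total mass 2, first moments
  \<integral> n' = 0 and second moments \<integral> n'_i n'_j = (2/3) \<delta>_ij, so the kernel (1 + 3 u \<cdot> n') / 2 reproduces
  affine functions: A + n' \<cdot> V \<mapsto> A + u \<cdot> V.  With u the sign-flipped n and the Kronecker delta
  selecting m' = m, this is exactly the conjugated tomogram.\<close>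

lemma UNIV_2_eq: "(UNIV :: 2 set) = {0, 1}"
  by (auto simp: UNIV_2)

lemma has_integral_antiderivative:
  fixes F f :: "real \<Rightarrow> real"
  assumes "a \<le> b" and "\<And>x. (F has_real_derivative f x) (at x)" and "F b - F a = I"
  shows "(f has_integral I) {a..b}"
  using fundamental_theorem_of_calculus[OF assms(1), of F f] assms(2,3)
  by (simp add: has_real_derivative_iff_has_vector_derivative[symmetric] has_field_derivative_at_within)

lemma has_integral_sin_0_pi: "(sin has_integral 2) {0..pi}"
  by (rule has_integral_antiderivative[where F = "\<lambda>x. - cos x"]) (auto intro!: derivative_eq_intros)

lemma has_integral_sin_power2_0_pi: "((\<lambda>x. sin x ^ 2) has_integral pi / 2) {0..pi}"
  by (rule has_integral_antiderivative[where F = "\<lambda>x. x / 2 - sin (2 * x) / 4"])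
     (auto intro!: derivative_eq_intros simp: cos_double_sin divide_simps)

lemma has_integral_cos_mult_sin_0_pi: "((\<lambda>x. cos x * sin x) has_integral 0) {0..pi}"
  by (rule has_integral_antiderivative[where F = "\<lambda>x. sin x ^ 2 / 2"]) (auto intro!: derivative_eq_intros)

lemma has_integral_cos_mult_sin_power2_0_pi: "((\<lambda>x. cos x * sin x ^ 2) has_integral 0) {0..pi}"
  by (rule has_integral_antiderivative[where F = "\<lambda>x. sin x ^ 3 / 3"]) (auto intro!: derivative_eq_intros)

lemma has_integral_cos_power2_mult_sin_0_pi: "((\<lambda>x. cos x ^ 2 * sin x) has_integral 2 / 3) {0..pi}"
  by (rule has_integral_antiderivative[where F = "\<lambda>x. - (cos x ^ 3) / 3"]) (auto intro!: derivative_eq_intros)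

lemma has_integral_sin_power3_0_pi: "((\<lambda>x. sin x ^ 3) has_integral 4 / 3) {0..pi}"
proof -
  have "((\<lambda>x. sin x - cos x ^ 2 * sin x) has_integral 2 - 2 / 3) {0..pi}"
    by (intro has_integral_diff has_integral_sin_0_pi has_integral_cos_power2_mult_sin_0_pi)
  moreover have "sin x - cos x ^ 2 * sin x = sin x ^ 3" for x :: real
    by (subst cos_squared_eq) (simp add: algebra_simps power3_eq_cube power2_eq_square)
  ultimately show ?thesis by simp
qed

lemma has_integral_cos_0_2pi: "(cos has_integral 0) {0..2*pi}"
  by (rule has_integral_antiderivative[where F = sin]) (auto intro!: derivative_eq_intros)

lemma has_integral_sin_0_2pi: "(sin has_integral 0) {0..2*pi}"
  by (rule has_integral_antiderivative[where F = "\<lambda>x. - cos x"]) (auto intro!: derivative_eq_intros)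

lemma has_integral_cos_power2_0_2pi: "((\<lambda>x. cos x ^ 2) has_integral pi) {0..2*pi}"
  by (rule has_integral_antiderivative[where F = "\<lambda>x. x / 2 + sin (2 * x) / 4"])
     (auto intro!: derivative_eq_intros simp: cos_double_cos divide_simps)

lemma has_integral_sin_power2_0_2pi: "((\<lambda>x. sin x ^ 2) has_integral pi) {0..2*pi}"
  by (rule has_integral_antiderivative[where F = "\<lambda>x. x / 2 - sin (2 * x) / 4"])
     (auto intro!: derivative_eq_intros simp: cos_double_sin divide_simps)

lemma has_integral_cos_mult_sin_0_2pi: "((\<lambda>x. cos x * sin x) has_integral 0) {0..2*pi}"
  by (rule has_integral_antiderivative[where F = "\<lambda>x. sin x ^ 2 / 2"]) (auto intro!: derivative_eq_intros)

lemma kernel_affine_has_integral_polar: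
  fixes A X Y Z :: complex and u1 u2 u3 a :: real
  shows "((\<lambda>b. of_real (1/2 * (1 + 3 * u1 * cos a * sin b + 3 * u2 * sin a * sin b + 3 * u3 * cos b))
            * (A + of_real (cos a * sin b) * X + of_real (sin a * sin b) * Y + of_real (cos b) * Z)
            * of_real (sin b))
         has_integral A + of_real u3 * Z
           + of_real (pi / 4) * (of_real (cos a) * X + of_real (sin a) * Y + 3 * of_real (u1 * cos a + u2 * sin a) * A)
           + 2 * of_real (u1 * cos a + u2 * sin a) * (of_real (cos a) * X + of_real (sin a) * Y)) {0..pi}"
    (is "(?f has_integral ?I) _")
proof -
  define k :: complex where "k = of_real (u1 * cos a + u2 * sin a)"
  define V where "V = of_real (cos a) * X + of_real (sin a) * Y"
  have "?f = (\<lambda>b. A / 2 * of_real (sin b) + (V + 3 * k * A) / 2 * of_real (sin b ^ 2)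
          + (Z + 3 * of_real u3 * A) / 2 * of_real (cos b * sin b) + 3 / 2 * k * V * of_real (sin b ^ 3)
          + 3 / 2 * (k * Z + of_real u3 * V) * of_real (cos b * sin b ^ 2)
          + 3 / 2 * of_real u3 * Z * of_real (cos b ^ 2 * sin b))"
    by (simp add: fun_eq_iff k_def V_def field_simps power2_eq_square power3_eq_cube)
  moreover have "?I = A / 2 * of_real 2 + (V + 3 * k * A) / 2 * of_real (pi / 2)
          + (Z + 3 * of_real u3 * A) / 2 * of_real 0 + 3 / 2 * k * V * of_real (4 / 3)
          + 3 / 2 * (k * Z + of_real u3 * V) * of_real 0 + 3 / 2 * of_real u3 * Z * of_real (2 / 3)"
    by (simp add: k_def V_def field_simps)
  ultimately show ?thesis
    by (simp only:) (intro has_integral_add has_integral_mult_right has_integral_of_real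
        has_integral_sin_0_pi has_integral_sin_power2_0_pi has_integral_cos_mult_sin_0_pi
        has_integral_sin_power3_0_pi has_integral_cos_mult_sin_power2_0_pi
        has_integral_cos_power2_mult_sin_0_pi)
qed

lemma kernel_affine_has_integral_azimuthal:
  fixes A X Y Z :: complex and u1 u2 u3 :: real
  shows "((\<lambda>a. A + of_real u3 * Z
            + of_real (pi / 4) * (of_real (cos a) * X + of_real (sin a) * Y + 3 * of_real (u1 * cos a + u2 * sin a) * A)
            + 2 * of_real (u1 * cos a + u2 * sin a) * (of_real (cos a) * X + of_real (sin a) * Y))
         has_integral of_real (2 * pi) * (A + of_real u1 * X + of_real u2 * Y + of_real u3 * Z)) {0..2*pi}"
    (is "(?f has_integral ?I) _")
proof -
  have "?f = (\<lambda>a. (A + of_real u3 * Z) + of_real (pi / 4) * (X + 3 * of_real u1 * A) * of_real (cos a)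
          + of_real (pi / 4) * (Y + 3 * of_real u2 * A) * of_real (sin a) + 2 * of_real u1 * X * of_real (cos a ^ 2)
          + 2 * of_real u2 * Y * of_real (sin a ^ 2) + 2 * (of_real u1 * Y + of_real u2 * X) * of_real (cos a * sin a))"
    by (simp add: fun_eq_iff field_simps power2_eq_square)
  moreover have "?I = of_real (2 * pi) * (A + of_real u3 * Z) + of_real (pi / 4) * (X + 3 * of_real u1 * A) * of_real 0
          + of_real (pi / 4) * (Y + 3 * of_real u2 * A) * of_real 0 + 2 * of_real u1 * X * of_real pi
          + 2 * of_real u2 * Y * of_real pi + 2 * (of_real u1 * Y + of_real u2 * X) * of_real 0"
    by (simp add: field_simps)
  moreover have "((\<lambda>a. A + of_real u3 * Z) has_integral of_real (2 * pi) * (A + of_real u3 * Z)) {0..2*pi}"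
    using has_integral_const_real[of "A + of_real u3 * Z" 0 "2 * pi"] by (simp add: scaleR_conv_of_real)
  ultimately show ?thesis
    by (simp only:) (intro has_integral_add has_integral_mult_right has_integral_of_real
        has_integral_cos_0_2pi has_integral_sin_0_2pi has_integral_cos_power2_0_2pi
        has_integral_sin_power2_0_2pi has_integral_cos_mult_sin_0_2pi)
qed

lemma spherical_kernel_reproduces_affine:
  fixes A X Y Z :: complex and u1 u2 u3 :: real
  shows "of_real (1 / (2 * pi)) * integral {0..2*pi} (\<lambda>\<alpha>. integral {0..pi} (\<lambda>\<beta>.
           of_real (1/2 * (1 + 3 * u1 * cos \<alpha> * sin \<beta> + 3 * u2 * sin \<alpha> * sin \<beta> + 3 * u3 * cos \<beta>))
           * (A + of_real (cos \<alpha> * sin \<beta>) * X + of_real (sin \<alpha> * sin \<beta>) * Y + of_real (cos \<beta>) * Z)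
           * of_real (sin \<beta>)))
         = A + of_real u1 * X + of_real u2 * Y + of_real u3 * Z"
  unfolding integral_unique[OF kernel_affine_has_integral_polar] integral_unique[OF kernel_affine_has_integral_azimuthal]
  by (simp add: mult.assoc[symmetric] of_real_mult[symmetric] del: of_real_mult)

lemma tomogram_pauli_expansion:
  "tomogram \<rho> m \<alpha> \<beta> = trace \<rho> / 2
     + of_real (cos \<alpha> * sin \<beta>) * (- of_real m * trace (\<rho> ** pauli AX))
     + of_real (sin \<alpha> * sin \<beta>) * (- of_real m * trace (\<rho> ** pauli AY))
     + of_real (cos \<beta>) * (of_real m * trace (\<rho> ** pauli AZ))"
  unfolding tomogram_def U_op_def pauli_def trace_def matrix_matrix_mult_def cscale_def Id2_def
    sigma_x_def sigma_y_def sigma_z_def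
  by (simp add: UNIV_2_eq mat_def algebra_simps)

definition pauli_conj_sign :: "pauli_axis \<Rightarrow> pauli_axis \<Rightarrow> real" where
  "pauli_conj_sign a b = (if a = b then 1 else -1)"

lemma trace_pauli_conj: "trace (pauli a ** \<rho> ** pauli a) = trace \<rho>"
  by (cases a) (simp_all add: pauli_def sigma_x_def sigma_y_def sigma_z_def trace_def
      matrix_matrix_mult_def UNIV_2_eq algebra_simps)

lemma trace_pauli_conj_mult_pauli:
  "trace (pauli a ** \<rho> ** pauli a ** pauli b) = of_real (pauli_conj_sign a b) * trace (\<rho> ** pauli b)"
  by (cases a; cases b) (simp_all add: pauli_conj_sign_def pauli_def sigma_x_def sigma_y_def sigma_z_def
      trace_def matrix_matrix_mult_def UNIV_2_eq algebra_simps)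

lemma ksign_eq: "ksign a = (pauli_conj_sign a AX, pauli_conj_sign a AY, pauli_conj_sign a AZ)"
  by (cases a) (simp_all add: ksign_def pauli_conj_sign_def)

lemma integral_kernel_mult_tomogram:
  "of_real (1 / (2 * pi)) * integral {0..2*pi} (\<lambda>\<alpha>'. integral {0..pi} (\<lambda>\<beta>'.
      of_real (kernel a m \<alpha> \<beta> m \<alpha>' \<beta>') * tomogram \<rho> m \<alpha>' \<beta>' * of_real (sin \<beta>')))
   = tomogram (pauli a ** \<rho> ** pauli a) m \<alpha> \<beta>"
proof -
  define u1 where "u1 = pauli_conj_sign a AX * cos \<alpha> * sin \<beta>"
  define u2 where "u2 = pauli_conj_sign a AY * sin \<alpha> * sin \<beta>"
  define u3 where "u3 = pauli_conj_sign a AZ * cos \<beta>"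
  have "kernel a m \<alpha> \<beta> m \<alpha>' \<beta>' =
      1/2 * (1 + 3 * u1 * cos \<alpha>' * sin \<beta>' + 3 * u2 * sin \<alpha>' * sin \<beta>' + 3 * u3 * cos \<beta>')" for \<alpha>' \<beta>'
    by (simp add: kernel_def ksign_eq kdelta_def u1_def u2_def u3_def)
  then have "of_real (1 / (2 * pi)) * integral {0..2*pi} (\<lambda>\<alpha>'. integral {0..pi} (\<lambda>\<beta>'.
      of_real (kernel a m \<alpha> \<beta> m \<alpha>' \<beta>') * tomogram \<rho> m \<alpha>' \<beta>' * of_real (sin \<beta>')))
    = trace \<rho> / 2 + of_real u1 * (- of_real m * trace (\<rho> ** pauli AX))
      + of_real u2 * (- of_real m * trace (\<rho> ** pauli AY)) + of_real u3 * (of_real m * trace (\<rho> ** pauli AZ))"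
    by (simp only: tomogram_pauli_expansion spherical_kernel_reproduces_affine)
  also have "\<dots> = tomogram (pauli a ** \<rho> ** pauli a) m \<alpha> \<beta>"
    by (simp add: tomogram_pauli_expansion trace_pauli_conj trace_pauli_conj_mult_pauli
        u1_def u2_def u3_def algebra_simps)
  finally show ?thesis .
qed

lemma tint_kernel_mult_tomogram:
  assumes "m \<in> {-1/2, 1/2}"
  shows "tint (\<lambda>m' \<alpha>' \<beta>'. of_real (kernel a m \<alpha> \<beta> m' \<alpha>' \<beta>') * tomogram \<rho> m' \<alpha>' \<beta>')
    = tomogram (pauli a ** \<rho> ** pauli a) m \<alpha> \<beta>"
proof -
  have "tint (\<lambda>m' \<alpha>' \<beta>'. of_real (kernel a m \<alpha> \<beta> m' \<alpha>' \<beta>') * tomogram \<rho> m' \<alpha>' \<beta>')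
      = (\<Sum>m'\<in>{-1/2, 1/2}. if m' = m then tomogram (pauli a ** \<rho> ** pauli a) m \<alpha> \<beta> else 0)"
    unfolding tint_def
  proof (rule sum.cong)
    fix m'
    show "of_real (1 / (2 * pi)) * integral {0..2*pi} (\<lambda>\<alpha>'. integral {0..pi} (\<lambda>\<beta>'.
          of_real (kernel a m \<alpha> \<beta> m' \<alpha>' \<beta>') * tomogram \<rho> m' \<alpha>' \<beta>' * of_real (sin \<beta>')))
        = (if m' = m then tomogram (pauli a ** \<rho> ** pauli a) m \<alpha> \<beta> else 0)"
    proof (cases "m' = m")
      case True
      then show ?thesis by (simp only: integral_kernel_mult_tomogram) simp
    qed (simp add: kernel_def kdelta_def)
  qed simp
  also have "\<dots> = tomogram (pauli a ** \<rho> ** pauli a) m \<alpha> \<beta>"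
    using assms by simp
  finally show ?thesis .
qed

theorem proposition3:
  fixes a :: pauli_axis and w :: "real \<Rightarrow> real \<Rightarrow> real \<Rightarrow> complex"
    and m \<alpha> \<beta> :: real
  assumes "w \<in> tomograms"
    and "m \<in> {-1/2, 1/2}" and "\<alpha> \<in> {0..2*pi}" and "\<beta> \<in> {0..pi}"
  shows "Sigma_breve a w m \<alpha> \<beta> =
         tint (\<lambda>m' \<alpha>' \<beta>'. complex_of_real (kernel a m \<alpha> \<beta> m' \<alpha>' \<beta>') * w m' \<alpha>' \<beta>')"
proof -
  define \<rho> where "\<rho> = (SOME \<rho>. qubit_state \<rho> \<and> tomogram \<rho> = w)"
  have "\<exists>\<rho>. qubit_state \<rho> \<and> tomogram \<rho> = w"
    using assms(1) unfolding tomograms_def by blast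
  then have w: "w = tomogram \<rho>"
    unfolding \<rho>_def by (metis (mono_tags, lifting) someI_ex)
  show ?thesis
    unfolding Sigma_breve_def \<rho>_def[symmetric]
    using tint_kernel_mult_tomogram[OF assms(2)] by (simp add: w)
qed

end
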